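(* Let $n\in\mathbb{N}$, $H=H^\top\in\mathbb{R}^{2n\times2n}$, $\mathcal H(x)=\frac12x^\top Hx$, and $\Phi^{\Delta T}(x)=M(\Delta T)x$ with \[ M(\Delta T):=e^{\Delta T J_{2n}H}=\begin{pmatrix}A(\Delta T)&B(\Delta T)\\C(\Delta T)&D(\Delta T)\end{pmatrix} \] ($n\times n$ blocks). Let $\mathcal R:=\{\Delta T\in\mathbb{R}:\det D(\Delta T)=0\}$. Then $\mathcal R$ is discrete (has no finite accumulation point). Moreover, for any $\Delta T\notin\mathcal R$ with $\Delta T\neq0$: the map $\boldsymbol\Psi(q,p):=(q,C(\Delta T)q+D(\Delta T)p)$ is a diffeomorphism of $\mathbb{R}^{2n}$ onto $\mathbb{R}^{2n}$, $D(\Delta T)$ is invertible, and there exists $S\in C^1(\mathbb{R}^{2n})$, unique up to an additive constant, such that, with $(q,\mathbf p(q,P)):=\boldsymbol\Psi^{-1}(q,P)$ and $\mathbf Q(q,P):=A(\Delta T)q+B(\Delta T)\mathbf p(q,P)$, \[ \mathbf p(q,P)=\partial_qS(q,P),\qquad \mathbf Q(q,P)=\partial_PS(q,P)\quad\text{for all }(q,P)\in\mathbb{R}^{2n}, \] and $S^{\Delta T}(q,P):=\frac1{\Delta T}(S(q,P)-q^\top P)$ satisfies $J_{2n}^\top\frac{\Phi^{\Delta T}(x)-x}{\Delta T}=\nabla_{(q,P)}S^{\Delta T}(I_1x+I_2\Phi^{\Delta T}(x))$ for all $x\in\mathbb{R}^{2n}$.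
   Context: $J_{2n}=\begin{bmatrix}0_n&I_n\\-I_n&0_n\end{bmatrix}$, $I_1=\begin{bmatrix}I_n&0\\0&0\end{bmatrix}$, $I_2=\begin{bmatrix}0&0\\0&I_n\end{bmatrix}$; $x=(q,p)\in\mathbb{R}^n\times\mathbb{R}^n$. $\Phi^{\Delta T}$ is the time-$\Delta T$ flow of $\dot x=J_{2n}\nabla\mathcal H(x)=J_{2n}Hx$. *)

theory Defs
  imports "HOL-Analysis.Analysis"
begin

text \<open>Phase space R^{2n} is modelled as real^('n + 'n): index Inl k is q_k, index Inr k is p_k.\<close>

type_synonym 'n phase = "real ^ ('n + 'n)"
type_synonym 'n pmat = "real ^ ('n + 'n) ^ ('n + 'n)"

fun matpow :: "real ^ 'm ^ 'm \<Rightarrow> nat \<Rightarrow> real ^ 'm ^ 'm" where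
  "matpow A 0 = mat 1"
| "matpow A (Suc k) = A ** matpow A k"

definition mexp :: "real ^ 'm ^ 'm \<Rightarrow> real ^ 'm ^ 'm" where
  "mexp X = (\<Sum>k. (1 / fact k) *\<^sub>R matpow X k)"

definition Jmat :: "('n::finite) pmat" where
  "Jmat = (\<chi> i j. case (i, j) of
       (Inl a, Inr b) \<Rightarrow> (if a = b then 1 else 0)
     | (Inr a, Inl b) \<Rightarrow> (if a = b then -1 else 0)
     | _ \<Rightarrow> 0)"

definition I1mat :: "('n::finite) pmat" where
  "I1mat = (\<chi> i j. case (i, j) of (Inl a, Inl b) \<Rightarrow> (if a = b then 1 else 0) | _ \<Rightarrow> 0)"
definition I2mat :: "('n::finite) pmat" where
  "I2mat = (\<chi> i j. case (i, j) of (Inr a, Inr b) \<Rightarrow> (if a = b then 1 else 0) | _ \<Rightarrow> 0)"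

definition Mflow :: "('n::finite) pmat \<Rightarrow> real \<Rightarrow> 'n pmat" where
  "Mflow H t = mexp (t *\<^sub>R (Jmat ** H))"

definition blkA :: "('n::finite) pmat \<Rightarrow> real ^ 'n ^ 'n" where
  "blkA M = (\<chi> i j. M $ Inl i $ Inl j)"
definition blkB :: "('n::finite) pmat \<Rightarrow> real ^ 'n ^ 'n" where
  "blkB M = (\<chi> i j. M $ Inl i $ Inr j)"
definition blkC :: "('n::finite) pmat \<Rightarrow> real ^ 'n ^ 'n" where
  "blkC M = (\<chi> i j. M $ Inr i $ Inl j)"
definition blkD :: "('n::finite) pmat \<Rightarrow> real ^ 'n ^ 'n" where
  "blkD M = (\<chi> i j. M $ Inr i $ Inr j)"

definition qp :: "real ^ ('n::finite) \<Rightarrow> real ^ 'n \<Rightarrow> 'n phase" where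
  "qp q p = (\<chi> i. case i of Inl k \<Rightarrow> q $ k | Inr k \<Rightarrow> p $ k)"
definition qpart :: "('n::finite) phase \<Rightarrow> real ^ 'n" where
  "qpart x = (\<chi> k. x $ Inl k)"
definition ppart :: "('n::finite) phase \<Rightarrow> real ^ 'n" where
  "ppart x = (\<chi> k. x $ Inr k)"

definition C1_UNIV :: "('a::euclidean_space \<Rightarrow> 'b::euclidean_space) \<Rightarrow> bool" where
  "C1_UNIV f \<longleftrightarrow> (\<exists>f'. (\<forall>x. (f has_derivative blinfun_apply (f' x)) (at x)) \<and> continuous_on UNIV f')"

definition diffeo_UNIV :: "('a::euclidean_space \<Rightarrow> 'a) \<Rightarrow> bool" where
  "diffeo_UNIV f \<longleftrightarrow> bij f \<and> C1_UNIV f \<and> C1_UNIV (inv f)"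

end

theory Submission
  imports Defs "HOL-Complex_Analysis.Conformal_Mappings"
begin

text \<open>
  Two facts about M(t) = exp(t J H) drive the theorem. First, every entry of M(t) is the
  restriction to the real line of an entire function, hence so is det D(t); since det D(0) = 1,
  its real zeros cannot accumulate. Second, M(t) is symplectic because J H is a Hamiltonian
  matrix. When D is invertible, symplecticity makes D^-1 C and B D^-1 symmetric, so
  the linear map (q, P) \<mapsto> (p, Q) of the flow is the gradient of a quadratic form S;
  along the graph of the flow, the gradient of S(q, P) - q \<bullet> P is J^T (M x - x).
\<close>

section \<open>The matrix exponential\<close>

definition mexp_coeff :: "real^'m^'m \<Rightarrow> 'm::finite \<Rightarrow> 'm \<Rightarrow> nat \<Rightarrow> real" where
  "mexp_coeff X i j k = matpow X k $ i $ j / fact k"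

definition abs_entry_sum :: "real^'m^'m \<Rightarrow> real" where
  "abs_entry_sum X = (\<Sum>i\<in>UNIV. \<Sum>l\<in>UNIV. \<bar>X$i$l\<bar>)"

lemma abs_matpow_le: "\<bar>matpow (X::real^'m::finite^'m) k $ i $ j\<bar> \<le> abs_entry_sum X ^ k"
proof (induction k arbitrary: i j)
  case 0
  then show ?case by (simp add: mat_def)
next
  case (Suc k)
  have row: "(\<Sum>l\<in>UNIV. \<bar>X$i$l\<bar>) \<le> abs_entry_sum X"
    unfolding abs_entry_sum_def by (rule member_le_sum) (auto intro: sum_nonneg)
  have "\<bar>matpow X (Suc k) $ i $ j\<bar> \<le> (\<Sum>l\<in>UNIV. \<bar>X$i$l\<bar> * abs_entry_sum X ^ k)"
    by (simp add: matrix_matrix_mult_def)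
      (rule order_trans[OF sum_abs], auto simp: abs_mult intro!: sum_mono mult_left_mono Suc.IH)
  also have "\<dots> \<le> abs_entry_sum X * abs_entry_sum X ^ k"
    unfolding sum_distrib_right[symmetric]
    by (rule mult_right_mono[OF row]) (simp add: abs_entry_sum_def sum_nonneg)
  finally show ?case by simp
qed

lemma summable_mexp_coeff_powser:
  fixes z :: "'a::{real_normed_field,banach}"
  shows "summable (\<lambda>k. of_real (mexp_coeff X i j k) * z^k)"
proof (rule summable_comparison_test'[where N=0])
  show "summable (\<lambda>k. inverse (fact k) * (abs_entry_sum X * norm z) ^ k)"
    by (rule summable_exp)
  fix k :: nat
  have "norm (of_real (mexp_coeff X i j k) * z^k) = \<bar>matpow X k $ i $ j\<bar> / fact k * norm z ^ k"
    by (simp add: mexp_coeff_def norm_mult norm_power norm_divide)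
  also have "\<dots> \<le> abs_entry_sum X ^ k / fact k * norm z ^ k"
    by (intro mult_right_mono divide_right_mono abs_matpow_le) auto
  also have "\<dots> = inverse (fact k) * (abs_entry_sum X * norm z) ^ k"
    by (simp add: power_mult_distrib field_simps)
  finally show "norm (of_real (mexp_coeff X i j k) * z^k)
      \<le> inverse (fact k) * (abs_entry_sum X * norm z) ^ k" .
qed

lemma summable_mexp_coeff_powser_real: "summable (\<lambda>k. mexp_coeff X i j k * (t::real)^k)"
  using summable_mexp_coeff_powser[of X i j t] by simp

lemma matpow_scaleR: "matpow (t *\<^sub>R X) k = t^k *\<^sub>R matpow (X::real^'m::finite^'m) k"
  by (induction k) (simp_all add: scalar_matrix_assoc matrix_scalar_ac mult.commute)

lemma sums_vec:
  "(\<And>i. (\<lambda>k. f k $ i) sums (s $ i)) \<Longrightarrow> f sums (s::'a::real_normed_vector^'n::finite)"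
  unfolding sums_def by (rule vec_tendstoI) (simp add: sum_component)

lemma mexp_scaleR_entry:
  "mexp (t *\<^sub>R X) $ i $ j = (\<Sum>k. mexp_coeff (X::real^'m::finite^'m) i j k * t^k)"
proof -
  have "((1 / fact k) *\<^sub>R matpow (t *\<^sub>R X) k) $ i $ j = mexp_coeff X i j k * t^k" for i j k
    by (simp add: matpow_scaleR mexp_coeff_def)
  then have "(\<lambda>k. (1 / fact k) *\<^sub>R matpow (t *\<^sub>R X) k) sums (\<chi> i j. \<Sum>k. mexp_coeff X i j k * t^k)"
    by (intro sums_vec) (simp add: summable_sums[OF summable_mexp_coeff_powser_real])
  then show ?thesis unfolding mexp_def by (simp add: sums_iff)
qed

lemma mexp_0: "mexp 0 = (mat 1 :: real^'m::finite^'m)"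
proof -
  have "mexp (0 *\<^sub>R (0::real^'m^'m)) $ i $ j = mexp_coeff 0 i j 0" for i j
    using mexp_scaleR_entry[of 0 0 i j] powser_zero[of "mexp_coeff 0 i j"] by (simp only:)
  then show ?thesis by (simp add: vec_eq_iff mexp_coeff_def)
qed

lemma mexp_coeff_Suc:
  "real (Suc n) * mexp_coeff X i j (Suc n) = (\<Sum>l\<in>UNIV. X$i$l * mexp_coeff X l j n)"
  unfolding mexp_coeff_def
  by (simp add: matrix_matrix_mult_def sum_divide_distrib sum_distrib_left)

lemma has_real_derivative_mexp_entry:
  "((\<lambda>s. mexp (s *\<^sub>R X) $ i $ j) has_real_derivative (X ** mexp (t *\<^sub>R X)) $ i $ j) (at t)"
proof -
  have "((\<lambda>s. \<Sum>k. mexp_coeff X i j k * s^k) has_real_derivative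
      (\<Sum>n. diffs (mexp_coeff X i j) n * t^n)) (at t)"
    by (rule termdiffs_strong_converges_everywhere) (rule summable_mexp_coeff_powser_real)
  moreover have "(\<Sum>n. diffs (mexp_coeff X i j) n * t^n)
      = (\<Sum>l\<in>UNIV. \<Sum>n. X$i$l * (mexp_coeff X l j n * t^n))"
    unfolding diffs_def mexp_coeff_Suc sum_distrib_right
    by (subst suminf_sum)
      (auto intro: summable_mult summable_mexp_coeff_powser_real simp: mult.assoc)
  ultimately show ?thesis
    by (simp add: mexp_scaleR_entry matrix_matrix_mult_def suminf_mult
        summable_mexp_coeff_powser_real)
qed

section \<open>Hamiltonian flows are symplectic\<close>

lemma sum_UNIV_sum_type:
  "(\<Sum>a\<in>(UNIV::('a::finite + 'b::finite) set). f a) = (\<Sum>x\<in>UNIV. f (Inl x)) + (\<Sum>y\<in>UNIV. f (Inr y))"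
  by (subst UNIV_Plus_UNIV[symmetric], subst sum.Plus) auto

lemma Jmat_simps [simp]:
  "Jmat $ Inl a $ Inl b = 0" "Jmat $ Inl a $ Inr b = (if a = b then 1 else 0)"
  "Jmat $ Inr a $ Inl b = (if a = b then -1 else 0)" "Jmat $ Inr a $ Inr b = 0"
  by (simp_all add: Jmat_def)

lemma Jmat_squared: "Jmat ** Jmat = - mat 1"
  unfolding vec_eq_iff
proof (intro allI)
  fix i j :: "'a + 'a"
  show "(Jmat ** Jmat) $ i $ j = (- mat 1 :: 'a pmat) $ i $ j"
    by (cases i; cases j) (simp_all add: matrix_matrix_mult_def sum_UNIV_sum_type mat_def
        if_distrib if_distribR cong: if_cong)
qed

lemma transpose_Jmat: "transpose Jmat = - Jmat"
  unfolding vec_eq_iff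
proof (intro allI)
  fix i j :: "'a + 'a"
  show "(transpose Jmat) $ i $ j = (- Jmat :: 'a pmat) $ i $ j"
    by (cases i; cases j) (simp_all add: transpose_def)
qed

lemma matrix_mul_uminus_left: "(- A) ** B = - (A ** (B::real^'n::finite^'n))"
  by (simp add: vec_eq_iff matrix_matrix_mult_def sum_negf)

lemma matrix_mul_uminus_right: "A ** (- B) = - (A ** (B::real^'n::finite^'n))"
  by (simp add: vec_eq_iff matrix_matrix_mult_def sum_negf)

lemma matrix_add_rdistrib: "(A + B) ** C = A ** C + B ** (C::real^'n::finite^'n)"
  by (simp add: vec_eq_iff matrix_matrix_mult_def sum.distrib distrib_right)

lemma matrix_diff_ldistrib: "A ** (B - C) = A ** B - A ** (C::real^'n::finite^'n)"
  by (simp add: vec_eq_iff matrix_matrix_mult_def sum_subtractf algebra_simps)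

lemma has_real_derivative_matrix_mult:
  assumes "\<And>i j. ((\<lambda>s. F s $i$j) has_real_derivative F' $i$j) (at t)"
    and "\<And>i j. ((\<lambda>s. G s $i$j) has_real_derivative G' $i$j) (at t)"
  shows "((\<lambda>s. (F s ** G s) $i$j) has_real_derivative (F' ** G t + F t ** G') $i$j) (at t)"
proof -
  have "((\<lambda>s. \<Sum>k\<in>UNIV. F s$i$k * G s$k$j) has_real_derivative
      (\<Sum>k\<in>UNIV. F t$i$k * G'$k$j + F'$i$k * G t$k$j)) (at t)"
    by (intro DERIV_sum DERIV_mult' assms)
  then show ?thesis by (simp add: matrix_matrix_mult_def sum.distrib add.commute)
qed

definition symplectic :: "('n::finite) pmat \<Rightarrow> bool" where
  "symplectic M \<longleftrightarrow> transpose M ** Jmat ** M = Jmat"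

lemma hamiltonian_Jmat_mult:
  assumes "transpose K = K"
  shows "transpose (Jmat ** K) ** Jmat + Jmat ** (Jmat ** K) = 0"
proof -
  have "transpose (Jmat ** K) ** Jmat = K"
    by (simp add: matrix_transpose_mul assms transpose_Jmat matrix_mul_assoc[symmetric]
        matrix_mul_uminus_left matrix_mul_uminus_right Jmat_squared)
  moreover have "Jmat ** (Jmat ** K) = - K"
    by (simp add: matrix_mul_assoc Jmat_squared matrix_mul_uminus_left)
  ultimately show ?thesis by simp
qed

lemma symplectic_mexp_hamiltonian:
  fixes K :: "('n::finite) pmat"
  assumes "transpose K = K"
  shows "symplectic (mexp (t *\<^sub>R (Jmat ** K)))"
proof -
  define X where "X = Jmat ** K"
  define M where "M s = mexp (s *\<^sub>R X)" for s
  have dM: "((\<lambda>s. M s $i$j) has_real_derivative (X ** M s)$i$j) (at s)" for s i j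
    unfolding M_def by (rule has_real_derivative_mexp_entry)
  have dMT: "((\<lambda>s. transpose (M s) $i$j) has_real_derivative (transpose (X ** M s))$i$j) (at s)"
    for s i j
    using dM by (simp add: transpose_def)
  have dJ: "((\<lambda>s. Jmat $i$j) has_real_derivative (0::'n pmat)$i$j) (at s)" for s i j
    by simp
  have dMTJ: "((\<lambda>s. (transpose (M s) ** Jmat)$i$j) has_real_derivative
      (transpose (X ** M s) ** Jmat)$i$j) (at s)" for s i j
    using has_real_derivative_matrix_mult[OF dMT dJ] by simp
  have "transpose (X ** M s) ** Jmat ** M s + transpose (M s) ** Jmat ** (X ** M s) = 0" for s
  proof -
    have "transpose (X ** M s) ** Jmat ** M s + transpose (M s) ** Jmat ** (X ** M s)
        = transpose (M s) ** (transpose X ** Jmat + Jmat ** X) ** M s"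
      by (simp add: matrix_transpose_mul matrix_mul_assoc matrix_add_ldistrib matrix_add_rdistrib)
    also have "\<dots> = 0"
      by (simp add: X_def hamiltonian_Jmat_mult assms)
    finally show ?thesis .
  qed
  then have "((\<lambda>s. (transpose (M s) ** Jmat ** M s)$i$j) has_real_derivative 0) (at s)" for s i j
    using has_real_derivative_matrix_mult[OF dMTJ dM, where t=s and i=i and j=j] by simp
  then have "(transpose (M t) ** Jmat ** M t)$i$j = (transpose (M 0) ** Jmat ** M 0)$i$j" for i j
    using DERIV_isconst_all[where f="\<lambda>s. (transpose (M s) ** Jmat ** M s)$i$j"] by blast
  then have "transpose (M t) ** Jmat ** M t = transpose (M 0) ** Jmat ** M 0"
    by (simp add: vec_eq_iff)
  then show ?thesis by (simp add: symplectic_def M_def X_def mexp_0)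
qed

lemma symplectic_transpose:
  assumes "symplectic M"
  shows "symplectic (transpose M)"
proof -
  have "(- (Jmat ** transpose M ** Jmat)) ** M = - (Jmat ** (transpose M ** Jmat ** M))"
    by (simp only: matrix_mul_uminus_left matrix_mul_assoc)
  also have "\<dots> = mat 1"
    using assms by (simp add: symplectic_def Jmat_squared)
  finally have "M ** (- (Jmat ** transpose M ** Jmat)) = mat 1"
    by (rule matrix_left_right_inverse1)
  then have "- (M ** Jmat ** transpose M ** Jmat) ** Jmat = Jmat"
    by (simp add: matrix_mul_uminus_right matrix_mul_assoc)
  then show ?thesis
    by (simp add: symplectic_def matrix_mul_uminus_left matrix_mul_assoc[symmetric] Jmat_squared
        matrix_mul_uminus_right)
qed

lemma transpose_Jmat_mult_entry:
  "(transpose M ** Jmat ** M) $ a $ b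
    = (\<Sum>k\<in>UNIV. M $ Inl k $ a * M $ Inr k $ b - M $ Inr k $ a * M $ Inl k $ b)"
  by (simp add: matrix_matrix_mult_def transpose_def sum_UNIV_sum_type sum_distrib_right
      sum_subtractf if_distrib if_distribR sum.distrib sum_negf algebra_simps cong: if_cong)

lemma symplectic_blocks:
  fixes M :: "('n::finite) pmat"
  assumes "symplectic M"
  shows "transpose (blkD M) ** blkA M - transpose (blkB M) ** blkC M = mat 1"
    and "transpose (blkD M) ** blkB M = transpose (blkB M) ** blkD M"
    and "blkC M ** transpose (blkD M) = blkD M ** transpose (blkC M)"
proof -
  have M: "(\<Sum>k\<in>UNIV. M $ Inl k $ a * M $ Inr k $ b - M $ Inr k $ a * M $ Inl k $ b) = Jmat $ a $ b"
    for a b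
    using assms transpose_Jmat_mult_entry[of M a b] by (simp add: symplectic_def)
  have MT: "(\<Sum>k\<in>UNIV. M $ a $ Inl k * M $ b $ Inr k - M $ a $ Inr k * M $ b $ Inl k) = Jmat $ a $ b"
    for a b
    using symplectic_transpose[OF assms] transpose_Jmat_mult_entry[of "transpose M" a b]
    by (simp add: symplectic_def transpose_def)
  show "transpose (blkD M) ** blkA M - transpose (blkB M) ** blkC M = mat 1"
    unfolding vec_eq_iff
  proof (intro allI)
    fix i j
    have "(\<Sum>k\<in>UNIV. M $ Inl k $ Inr i * M $ Inr k $ Inl j - M $ Inr k $ Inr i * M $ Inl k $ Inl j)
        = - (if i = j then 1 else 0)"
      using M[of "Inr i" "Inl j"] by simp
    then show "(transpose (blkD M) ** blkA M - transpose (blkB M) ** blkC M) $ i $ j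
        = mat 1 $ i $ j"
      by (simp add: matrix_matrix_mult_def transpose_def blkA_def blkB_def blkC_def blkD_def mat_def
          sum_subtractf)
  qed
  show "transpose (blkD M) ** blkB M = transpose (blkB M) ** blkD M"
    unfolding vec_eq_iff
  proof (intro allI)
    fix i j
    have "(\<Sum>k\<in>UNIV. M $ Inl k $ Inr i * M $ Inr k $ Inr j - M $ Inr k $ Inr i * M $ Inl k $ Inr j)
        = 0"
      using M[of "Inr i" "Inr j"] by simp
    then show "(transpose (blkD M) ** blkB M) $ i $ j = (transpose (blkB M) ** blkD M) $ i $ j"
      by (simp add: matrix_matrix_mult_def transpose_def blkB_def blkD_def sum_subtractf
          mult.commute)
  qed
  show "blkC M ** transpose (blkD M) = blkD M ** transpose (blkC M)"
    unfolding vec_eq_iff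
  proof (intro allI)
    fix i j
    have "(\<Sum>k\<in>UNIV. M $ Inr i $ Inl k * M $ Inr j $ Inr k - M $ Inr i $ Inr k * M $ Inr j $ Inl k)
        = 0"
      using MT[of "Inr i" "Inr j"] by simp
    then show "(blkC M ** transpose (blkD M)) $ i $ j = (blkD M ** transpose (blkC M)) $ i $ j"
      by (simp add: matrix_matrix_mult_def transpose_def blkC_def blkD_def sum_subtractf)
  qed
qed

section \<open>The zeros of det D(t) are isolated\<close>

lemma holomorphic_on_det:
  fixes F :: "complex \<Rightarrow> complex^'n::finite^'n"
  assumes "\<And>i j. (\<lambda>z. F z $ i $ j) holomorphic_on S"
  shows "(\<lambda>z. det (F z)) holomorphic_on S"
  unfolding det_def
  by (intro holomorphic_on_sum holomorphic_on_mult holomorphic_on_const holomorphic_on_prod assms)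

lemma det_of_real_matrix:
  "det (\<chi> i j. complex_of_real (A $ i $ j)) = of_real (det (A::real^'n::finite^'n))"
  by (simp add: det_def of_real_sum of_real_mult of_real_prod)

lemma not_islimpt_real_zeros_of_entire:
  fixes f :: "real \<Rightarrow> real"
  assumes F: "F holomorphic_on UNIV" and F_real: "\<And>t. F (of_real t) = of_real (f t)"
    and "f t0 \<noteq> 0"
  shows "\<not> t islimpt {s. f s = 0}"
proof
  assume lim: "t islimpt {s. f s = 0}"
  have "complex_of_real t islimpt of_real ` {s. f s = 0}"
    unfolding islimpt_approachable
  proof (intro allI impI)
    fix e :: real
    assume "e > 0"
    then obtain s where "f s = 0" "s \<noteq> t" "dist s t < e"
      using lim unfolding islimpt_approachable by auto
    then show "\<exists>z\<in>of_real ` {s. f s = 0}. z \<noteq> complex_of_real t \<and> dist z (of_real t) < e"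
      by (intro bexI[of _ "complex_of_real s"]) (auto simp: dist_of_real)
  qed
  then have "F (of_real t0) = 0"
    by (rule analytic_continuation[OF F open_UNIV connected_UNIV subset_UNIV UNIV_I _ _ UNIV_I])
      (auto simp: F_real)
  with F_real \<open>f t0 \<noteq> 0\<close> show False by simp
qed

definition mexp_complex :: "real^'m^'m \<Rightarrow> complex \<Rightarrow> complex^'m::finite^'m" where
  "mexp_complex X z = (\<chi> i j. \<Sum>k. of_real (mexp_coeff X i j k) * z^k)"

lemma holomorphic_mexp_complex_entry: "(\<lambda>z. mexp_complex X z $ i $ j) holomorphic_on UNIV"
  unfolding holomorphic_on_def field_differentiable_def mexp_complex_def vec_lambda_beta
  using termdiffs_strong_converges_everywhere[OF summable_mexp_coeff_powser] by blast

lemma mexp_complex_of_real: "mexp_complex X (of_real t) $ i $ j = of_real (mexp (t *\<^sub>R X) $ i $ j)"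
  by (simp add: mexp_complex_def mexp_scaleR_entry
      suminf_of_real[OF summable_mexp_coeff_powser_real])

lemma blkD_mat_1: "blkD (mat 1 :: ('n::finite) pmat) = mat 1"
  by (simp add: blkD_def mat_def vec_eq_iff)

lemma not_islimpt_zeros_det_blkD_mexp:
  "\<not> t islimpt {s. det (blkD (mexp (s *\<^sub>R (X::('n::finite) pmat)))) = 0}"
proof (rule not_islimpt_real_zeros_of_entire)
  show "(\<lambda>z. det (\<chi> i j. mexp_complex X z $ Inr i $ Inr j)) holomorphic_on UNIV"
    by (intro holomorphic_on_det) (simp add: holomorphic_mexp_complex_entry)
  show "det (\<chi> i j. mexp_complex X (of_real s) $ Inr i $ Inr j)
      = of_real (det (blkD (mexp (s *\<^sub>R X))))" for s
    by (simp add: mexp_complex_of_real blkD_def det_of_real_matrix[symmetric])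
  show "det (blkD (mexp (0 *\<^sub>R X))) \<noteq> 0"
    by (simp add: mexp_0 blkD_mat_1)
qed

lemma qpart_qp [simp]: "qpart (qp q p) = q"
  by (simp add: qpart_def qp_def vec_eq_iff)

lemma ppart_qp [simp]: "ppart (qp q p) = p"
  by (simp add: ppart_def qp_def vec_eq_iff)

lemma qp_qpart_ppart [simp]: "qp (qpart x) (ppart x) = x"
  unfolding vec_eq_iff
proof
  fix i
  show "qp (qpart x) (ppart x) $ i = x $ i"
    by (cases i) (simp_all add: qpart_def ppart_def qp_def)
qed

lemma phase_eq_iff: "x = y \<longleftrightarrow> qpart x = qpart y \<and> ppart x = ppart y"
  by (metis qp_qpart_ppart)

lemma qpart_add [simp]: "qpart (x + y) = qpart x + qpart y"
  by (simp add: qpart_def vec_eq_iff)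

lemma ppart_add [simp]: "ppart (x + y) = ppart x + ppart y"
  by (simp add: ppart_def vec_eq_iff)

lemma qpart_diff [simp]: "qpart (x - y) = qpart x - qpart y"
  by (simp add: qpart_def vec_eq_iff)

lemma ppart_diff [simp]: "ppart (x - y) = ppart x - ppart y"
  by (simp add: ppart_def vec_eq_iff)

lemma qpart_scaleR [simp]: "qpart (c *\<^sub>R x) = c *\<^sub>R qpart x"
  by (simp add: qpart_def vec_eq_iff)

lemma ppart_scaleR [simp]: "ppart (c *\<^sub>R x) = c *\<^sub>R ppart x"
  by (simp add: ppart_def vec_eq_iff)

lemma qp_add: "qp a b + qp c d = qp (a + c) (b + d)"
  by (simp add: phase_eq_iff)

lemma linear_qpart: "linear qpart"
  by (rule linearI) simp_all

lemma linear_ppart: "linear ppart"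
  by (rule linearI) simp_all

lemma inner_phase: "x \<bullet> y = qpart x \<bullet> qpart y + ppart x \<bullet> ppart y"
  by (simp add: inner_vec_def sum_UNIV_sum_type qpart_def ppart_def)

lemma qpart_matrix_vector_mult: "qpart (M *v x) = blkA M *v qpart x + blkB M *v ppart x"
  by (simp add: vec_eq_iff qpart_def ppart_def blkA_def blkB_def matrix_vector_mult_def
      sum_UNIV_sum_type)

lemma ppart_matrix_vector_mult: "ppart (M *v x) = blkC M *v qpart x + blkD M *v ppart x"
  by (simp add: vec_eq_iff qpart_def ppart_def blkC_def blkD_def matrix_vector_mult_def
      sum_UNIV_sum_type)

lemma I1mat_I2mat_mult: "I1mat *v x + I2mat *v y = qp (qpart x) (ppart y)"
  unfolding vec_eq_iff
proof
  fix i
  show "(I1mat *v x + I2mat *v y) $ i = qp (qpart x) (ppart y) $ i"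
    by (cases i) (simp_all add: I1mat_def I2mat_def matrix_vector_mult_def sum_UNIV_sum_type qp_def
        qpart_def ppart_def if_distrib if_distribR cong: if_cong)
qed

lemma transpose_Jmat_mult: "transpose Jmat *v v = qp (- ppart v) (qpart v)"
  unfolding vec_eq_iff
proof
  fix i
  show "(transpose Jmat *v v) $ i = qp (- ppart v) (qpart v) $ i"
    by (cases i) (simp_all add: transpose_def matrix_vector_mult_def sum_UNIV_sum_type qp_def
        qpart_def ppart_def if_distrib if_distribR cong: if_cong)
qed

lemma inner_matrix_vector_mult: "(A *v x) \<bullet> y = x \<bullet> (transpose A *v (y::real^'n::finite))"
  by (metis dot_lmul_matrix transpose_matrix_vector transpose_transpose)

lemma has_derivative_qp_left: "((\<lambda>q'. qp q' p) has_derivative (\<lambda>h. qp h 0)) (at q)"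
proof -
  have "linear (\<lambda>h. qp h (0::real^'n::finite))"
    by (rule linearI) (simp_all add: phase_eq_iff)
  then have "((\<lambda>q'. qp q' 0 + qp 0 p) has_derivative (\<lambda>h. qp h 0)) (at q)"
    by (rule has_derivative_add_const[OF linear_imp_has_derivative])
  then show ?thesis by (simp add: qp_add)
qed

lemma has_derivative_qp_right: "((\<lambda>p'. qp q p') has_derivative (\<lambda>h. qp 0 h)) (at p)"
proof -
  have "linear (\<lambda>h. qp (0::real^'n::finite) h)"
    by (rule linearI) (simp_all add: phase_eq_iff)
  then have "((\<lambda>p'. qp 0 p' + qp q 0) has_derivative (\<lambda>h. qp 0 h)) (at p)"
    by (rule has_derivative_add_const[OF linear_imp_has_derivative])
  then show ?thesis by (simp add: qp_add)
qed

lemma has_derivative_partials_qp: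
  assumes "(F has_derivative F') (at (qp q p))"
  shows "((\<lambda>q'. F (qp q' p)) has_derivative (\<lambda>h. F' (qp h 0))) (at q)"
    and "((\<lambda>p'. F (qp q p')) has_derivative (\<lambda>h. F' (qp 0 h))) (at p)"
  using diff_chain_at[OF has_derivative_qp_left assms]
    diff_chain_at[OF has_derivative_qp_right assms]
  by (simp_all add: o_def)

lemma has_derivative_eq_gradient_from_partials:
  assumes F': "(F has_derivative F') (at (qp q p))"
    and "((\<lambda>q'. F (qp q' p)) has_derivative (\<lambda>h. a \<bullet> h)) (at q)"
    and "((\<lambda>p'. F (qp q p')) has_derivative (\<lambda>h. b \<bullet> h)) (at p)"
  shows "F' = (\<lambda>h. qp a b \<bullet> h)"
proof
  fix h
  have "(\<lambda>h. F' (qp h 0)) = (\<lambda>h. a \<bullet> h)" "(\<lambda>h. F' (qp 0 h)) = (\<lambda>h. b \<bullet> h)"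
    using has_derivative_unique has_derivative_partials_qp[OF F'] assms(2,3) by blast+
  then have partials: "F' (qp u 0) = a \<bullet> u" "F' (qp 0 u) = b \<bullet> u" for u
    by metis+
  have "F' h = F' (qp (qpart h) 0 + qp 0 (ppart h))"
    by (simp add: qp_add)
  also have "\<dots> = F' (qp (qpart h) 0) + F' (qp 0 (ppart h))"
    by (rule linear_add[OF has_derivative_linear[OF F']])
  also have "\<dots> = qp a b \<bullet> h"
    by (simp add: partials inner_phase)
  finally show "F' h = qp a b \<bullet> h" .
qed

lemma C1_UNIV_linear: "linear f \<Longrightarrow> C1_UNIV f"
  unfolding C1_UNIV_def
  by (intro exI[of _ "\<lambda>_. Blinfun f"])
    (simp add: bounded_linear_Blinfun_apply linear_conv_bounded_linear[symmetric]
      linear_imp_has_derivative)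

lemma C1_UNIV_linear_gradient:
  assumes "\<And>y. (S has_derivative (\<lambda>h. G y \<bullet> h)) (at y)" and "linear G"
  shows "C1_UNIV S"
  unfolding C1_UNIV_def
proof (intro exI[of _ "\<lambda>y. blinfun_inner_left (G y)"] conjI allI)
  show "(S has_derivative blinfun_apply (blinfun_inner_left (G y))) (at y)" for y
    using assms(1)[of y] by (simp add: inner_commute)
  show "continuous_on UNIV (\<lambda>y. blinfun_inner_left (G y))"
    using assms(2)
    by (intro bounded_linear.continuous_on[OF bounded_linear_blinfun_inner_left]
        linear_continuous_on)
      (simp add: linear_conv_bounded_linear[symmetric])
qed

lemma diffeo_UNIV_linear:
  assumes "linear f" "linear g" "\<And>x. g (f x) = x" "\<And>y. f (g y) = y"
  shows "diffeo_UNIV f"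
proof -
  have "bij f"
    using assms(3,4) by (intro o_bij[of g]) auto
  moreover have "inv f = g"
    using assms(3,4) by (intro inv_equality) auto
  ultimately show ?thesis
    unfolding diffeo_UNIV_def using assms(1,2) C1_UNIV_linear by blast
qed

lemma has_derivative_quadratic_form:
  fixes G :: "'a::euclidean_space \<Rightarrow> 'a"
  assumes "linear G" and "\<And>y h. G y \<bullet> h = G h \<bullet> y"
  shows "((\<lambda>y. G y \<bullet> y / 2) has_derivative (\<lambda>h. G y \<bullet> h)) (at y)"
proof -
  have "((\<lambda>y. G y \<bullet> y) has_derivative (\<lambda>h. G y \<bullet> h + G h \<bullet> y)) (at y)"
    by (rule has_derivative_inner[OF linear_imp_has_derivative[OF assms(1)] has_derivative_ident])
  then have "((\<lambda>y. G y \<bullet> y / 2) has_derivative (\<lambda>h. (G y \<bullet> h + G h \<bullet> y) / 2)) (at y)"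
    by (rule bounded_linear.has_derivative[OF bounded_linear_divide])
  then show ?thesis by (simp add: assms(2))
qed

lemma GDERIV_minus_inner_qpart_ppart:
  assumes "(S has_derivative (\<lambda>h. g \<bullet> h)) (at y)"
  shows "GDERIV (\<lambda>y. S y - qpart y \<bullet> ppart y) y :> g - qp (ppart y) (qpart y)"
proof -
  have "((\<lambda>y. S y - qpart y \<bullet> ppart y) has_derivative
      (\<lambda>h. g \<bullet> h - (qpart y \<bullet> ppart h + qpart h \<bullet> ppart y))) (at y)"
    by (intro has_derivative_diff has_derivative_inner assms
        linear_imp_has_derivative[OF linear_qpart] linear_imp_has_derivative[OF linear_ppart])
  then show ?thesis
    by (simp add: gderiv_def inner_diff_right inner_phase inner_commute algebra_simps)
qed

lemma GDERIV_divide_const: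
  assumes "GDERIV f y :> g"
  shows "GDERIV (\<lambda>y. f y / c) y :> (1 / c) *\<^sub>R g"
proof -
  have "((\<lambda>y. f y / c) has_derivative (\<lambda>h. (h \<bullet> g) / c)) (at y)"
    using assms unfolding gderiv_def
    by (rule bounded_linear.has_derivative[OF bounded_linear_divide])
  then show ?thesis by (simp add: gderiv_def)
qed

section \<open>The generating function of a symplectic map with invertible D block\<close>

definition to_qP :: "('n::finite) pmat \<Rightarrow> 'n phase \<Rightarrow> 'n phase" where
  "to_qP M x = qp (qpart x) (blkC M *v qpart x + blkD M *v ppart x)"

definition generates :: "('n phase \<Rightarrow> real) \<Rightarrow> ('n::finite) pmat \<Rightarrow> bool" where
  "generates S M \<longleftrightarrow> C1_UNIV S \<and>
    (\<forall>q P. ((\<lambda>q'. S (qp q' P)) has_derivative (\<lambda>u. ppart (inv (to_qP M) (qp q P)) \<bullet> u)) (at q)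
      \<and> ((\<lambda>P'. S (qp q P')) has_derivative
            (\<lambda>u. (blkA M *v q + blkB M *v ppart (inv (to_qP M) (qp q P))) \<bullet> u)) (at P))"

locale symplectic_invertible_D =
  fixes M :: "('n::finite) pmat"
  assumes symplectic: "symplectic M"
    and invertible_D: "invertible (blkD M)"
begin

definition Dinv :: "real^'n^'n" where
  "Dinv = matrix_inv (blkD M)"

lemma D_Dinv: "blkD M ** Dinv = mat 1"
  and Dinv_D: "Dinv ** blkD M = mat 1"
  using someI_ex[OF invertible_D[unfolded invertible_def]]
  by (simp_all add: Dinv_def matrix_inv_def)

lemma transpose_Dinv_C: "transpose (Dinv ** blkC M) = Dinv ** blkC M"
proof -
  have "Dinv ** blkC M = Dinv ** blkC M ** (transpose (blkD M) ** transpose Dinv)"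
    by (simp add: Dinv_D flip: matrix_transpose_mul)
  also have "\<dots> = Dinv ** (blkC M ** transpose (blkD M)) ** transpose Dinv"
    by (simp add: matrix_mul_assoc)
  also have "\<dots> = Dinv ** (blkD M ** transpose (blkC M)) ** transpose Dinv"
    by (simp add: symplectic_blocks(3)[OF symplectic])
  also have "\<dots> = transpose (Dinv ** blkC M)"
    by (simp add: matrix_mul_assoc Dinv_D matrix_transpose_mul)
  finally show ?thesis by simp
qed

lemma transpose_B_Dinv: "transpose (blkB M ** Dinv) = blkB M ** Dinv"
proof -
  have "transpose (blkB M ** Dinv) = transpose Dinv ** transpose (blkB M) ** (blkD M ** Dinv)"
    by (simp add: D_Dinv matrix_transpose_mul)
  also have "\<dots> = transpose Dinv ** (transpose (blkD M) ** blkB M) ** Dinv"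
    by (simp add: matrix_mul_assoc symplectic_blocks(2)[OF symplectic])
  also have "\<dots> = blkB M ** Dinv"
    by (simp add: matrix_mul_assoc D_Dinv flip: matrix_transpose_mul)
  finally show ?thesis .
qed

lemma A_minus_B_Dinv_C: "blkA M - blkB M ** Dinv ** blkC M = transpose Dinv"
proof -
  have "transpose Dinv
      = transpose Dinv ** (transpose (blkD M) ** blkA M - transpose (blkB M) ** blkC M)"
    by (simp add: symplectic_blocks(1)[OF symplectic])
  also have "\<dots>
      = (transpose Dinv ** transpose (blkD M)) ** blkA M - transpose (blkB M ** Dinv) ** blkC M"
    by (simp add: matrix_diff_ldistrib matrix_mul_assoc matrix_transpose_mul)
  also have "\<dots> = blkA M - blkB M ** Dinv ** blkC M"
    by (simp add: D_Dinv transpose_B_Dinv flip: matrix_transpose_mul)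
  finally show ?thesis by simp
qed

definition from_qP :: "'n phase \<Rightarrow> 'n phase" where
  "from_qP y = qp (qpart y) (Dinv *v (ppart y - blkC M *v qpart y))"

lemma to_qP_eq: "to_qP M x = qp (qpart x) (ppart (M *v x))"
  by (simp add: to_qP_def ppart_matrix_vector_mult)

lemma from_qP_to_qP: "from_qP (to_qP M x) = x"
  by (simp add: from_qP_def to_qP_def matrix_vector_mul_assoc Dinv_D)

lemma to_qP_from_qP: "to_qP M (from_qP y) = y"
  by (simp add: from_qP_def to_qP_def matrix_vector_mul_assoc D_Dinv)

lemma inv_to_qP: "inv (to_qP M) = from_qP"
  by (rule inv_equality) (simp_all add: from_qP_to_qP to_qP_from_qP)

lemma diffeo_UNIV_to_qP: "diffeo_UNIV (to_qP M)"
proof (rule diffeo_UNIV_linear)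
  show "linear (to_qP M)"
    unfolding to_qP_def[abs_def]
    by (rule linearI) (simp_all add: phase_eq_iff algebra_simps)
  show "linear from_qP"
    unfolding from_qP_def[abs_def]
    by (rule linearI) (simp_all add: phase_eq_iff algebra_simps)
qed (simp_all add: from_qP_to_qP to_qP_from_qP)

definition gen_grad :: "'n phase \<Rightarrow> 'n phase" where
  "gen_grad y = qp (Dinv *v (ppart y - blkC M *v qpart y))
                   (transpose Dinv *v qpart y + (blkB M ** Dinv) *v ppart y)"

lemma gen_grad_qp:
  "gen_grad (qp q P)
    = qp (ppart (inv (to_qP M) (qp q P))) (blkA M *v q + blkB M *v ppart (inv (to_qP M) (qp q P)))"
proof -
  have "blkA M *v q + blkB M *v (Dinv *v (P - blkC M *v q))
      = (blkA M - blkB M ** Dinv ** blkC M) *v q + (blkB M ** Dinv) *v P"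
    by (simp add: matrix_vector_mult_diff_distrib matrix_vector_mult_diff_rdistrib
        matrix_vector_mul_assoc matrix_mul_assoc algebra_simps)
  then show ?thesis
    by (simp add: gen_grad_def inv_to_qP from_qP_def A_minus_B_Dinv_C)
qed

lemma gen_grad_to_qP: "gen_grad (to_qP M x) = qp (ppart x) (qpart (M *v x))"
  using gen_grad_qp[of "qpart x" "ppart (M *v x)"]
  by (simp add: to_qP_eq[symmetric] inv_to_qP from_qP_to_qP qpart_matrix_vector_mult)

lemma linear_gen_grad: "linear gen_grad"
  unfolding gen_grad_def[abs_def]
  by (rule linearI) (simp_all add: phase_eq_iff algebra_simps)

lemma gen_grad_symmetric: "gen_grad y \<bullet> h = gen_grad h \<bullet> y"
proof -
  have Dinv: "(Dinv *v a) \<bullet> b = (transpose Dinv *v b) \<bullet> a"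
    and Dinv_C: "((Dinv ** blkC M) *v a) \<bullet> b = ((Dinv ** blkC M) *v b) \<bullet> a"
    and B_Dinv: "((blkB M ** Dinv) *v a) \<bullet> b = ((blkB M ** Dinv) *v b) \<bullet> a" for a b
    by (metis inner_matrix_vector_mult inner_commute transpose_Dinv_C transpose_B_Dinv)+
  show ?thesis
    unfolding gen_grad_def inner_phase qpart_qp ppart_qp matrix_vector_mult_diff_distrib
      matrix_vector_mul_assoc inner_diff_left inner_add_left
    unfolding Dinv[of "ppart y" "qpart h"] Dinv[of "ppart h" "qpart y"]
      Dinv_C[of "qpart y" "qpart h"] B_Dinv[of "ppart y" "ppart h"]
    by linarith
qed

definition gen_fun :: "'n phase \<Rightarrow> real" where
  "gen_fun y = gen_grad y \<bullet> y / 2"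

lemma has_derivative_gen_fun: "(gen_fun has_derivative (\<lambda>h. gen_grad y \<bullet> h)) (at y)"
  unfolding gen_fun_def[abs_def]
  by (rule has_derivative_quadratic_form[OF linear_gen_grad gen_grad_symmetric])

lemma generates_iff_gradient:
  "generates S M \<longleftrightarrow> (\<forall>y. (S has_derivative (\<lambda>h. gen_grad y \<bullet> h)) (at y))"
proof
  assume S: "generates S M"
  then obtain S' where S': "\<And>y. (S has_derivative blinfun_apply (S' y)) (at y)"
    unfolding generates_def C1_UNIV_def by blast
  have "blinfun_apply (S' (qp q P)) = (\<lambda>h. gen_grad (qp q P) \<bullet> h)" for q P
    using S unfolding generates_def gen_grad_qp
    by (intro has_derivative_eq_gradient_from_partials[OF S']) auto
  then show "\<forall>y. (S has_derivative (\<lambda>h. gen_grad y \<bullet> h)) (at y)"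
    by (metis S' qp_qpart_ppart)
next
  assume S: "\<forall>y. (S has_derivative (\<lambda>h. gen_grad y \<bullet> h)) (at y)"
  show "generates S M"
    unfolding generates_def
  proof (intro conjI allI)
    show "C1_UNIV S"
      using S linear_gen_grad by (intro C1_UNIV_linear_gradient) auto
    fix q P
    show "((\<lambda>q'. S (qp q' P)) has_derivative (\<lambda>u. ppart (inv (to_qP M) (qp q P)) \<bullet> u)) (at q)"
      and "((\<lambda>P'. S (qp q P')) has_derivative
            (\<lambda>u. (blkA M *v q + blkB M *v ppart (inv (to_qP M) (qp q P))) \<bullet> u)) (at P)"
      using has_derivative_partials_qp[OF S[rule_format, of "qp q P"]]
      by (simp_all add: gen_grad_qp inner_phase)
  qed
qed

lemma generates_gen_fun: "generates gen_fun M"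
  using has_derivative_gen_fun generates_iff_gradient by blast

lemma generates_unique:
  assumes "generates S M" and "generates S' M"
  shows "\<exists>c. \<forall>y. S' y = S y + c"
proof -
  have "((\<lambda>y. S' y - S y) has_derivative (\<lambda>h. 0)) (at y within UNIV)" for y
    using has_derivative_diff assms unfolding generates_iff_gradient by fastforce
  then obtain c where "\<forall>y\<in>UNIV. S' y - S y = c"
    using has_derivative_zero_constant[OF convex_UNIV] by blast
  then show ?thesis by (metis UNIV_I diff_add_cancel add.commute)
qed

lemma GDERIV_on_graph:
  assumes "generates S M"
  shows "GDERIV (\<lambda>y. S y - qpart y \<bullet> ppart y) (to_qP M x) :> transpose Jmat *v (M *v x - x)"
proof -
  have S: "(S has_derivative (\<lambda>h. gen_grad (to_qP M x) \<bullet> h)) (at (to_qP M x))"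
    using assms generates_iff_gradient by blast
  have "GDERIV (\<lambda>y. S y - qpart y \<bullet> ppart y) (to_qP M x)
      :> qp (ppart x) (qpart (M *v x)) - qp (ppart (M *v x)) (qpart x)"
    using GDERIV_minus_inner_qpart_ppart[OF S] unfolding gen_grad_to_qP by (simp add: to_qP_eq)
  moreover have "qp (ppart x) (qpart (M *v x)) - qp (ppart (M *v x)) (qpart x)
      = transpose Jmat *v (M *v x - x)"
    by (simp add: transpose_Jmat_mult phase_eq_iff del: transpose_matrix_vector)
  ultimately show ?thesis
    by (rule GDERIV_subst)
qed

lemma GDERIV_generating_function:
  assumes "generates S M"
  shows "GDERIV (\<lambda>y. (S y - qpart y \<bullet> ppart y) / \<Delta>T) (I1mat *v x + I2mat *v (M *v x))
    :> transpose Jmat *v ((1 / \<Delta>T) *\<^sub>R (M *v x - x))"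
  using GDERIV_divide_const[OF GDERIV_on_graph[OF assms], of \<Delta>T x]
  by (simp add: I1mat_I2mat_mult to_qP_eq matrix_vector_mult_scaleR)

theorem symplectic_map_generating_function:
  "diffeo_UNIV (to_qP M) \<and> invertible (blkD M) \<and>
    (\<exists>S. generates S M \<and> (\<forall>S'. generates S' M \<longrightarrow> (\<exists>c. \<forall>y. S' y = S y + c)) \<and>
      (\<forall>x. GDERIV (\<lambda>y. (S y - qpart y \<bullet> ppart y) / \<Delta>T) (I1mat *v x + I2mat *v (M *v x))
        :> transpose Jmat *v ((1 / \<Delta>T) *\<^sub>R (M *v x - x))))"
  using diffeo_UNIV_to_qP invertible_D generates_gen_fun generates_unique
    GDERIV_generating_function by blast

end

theorem theorem5:
  fixes H :: "('n::finite) pmat"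
  assumes symH: "transpose H = H"
  shows "(\<forall>t::real. \<not> t islimpt {s. det (blkD (Mflow H s)) = 0})
   \<and> (\<forall>\<Delta>T::real. det (blkD (Mflow H \<Delta>T)) \<noteq> 0 \<and> \<Delta>T \<noteq> 0 \<longrightarrow>
       (let M = Mflow H \<Delta>T;
            \<Psi> = (\<lambda>x::'n phase. qp (qpart x) (blkC M *v qpart x + blkD M *v ppart x));
            pp = (\<lambda>q P. ppart (inv \<Psi> (qp q P)));
            QQ = (\<lambda>q P. blkA M *v q + blkB M *v pp q P);
            \<Phi> = (\<lambda>x. M *v x);
            good = (\<lambda>S::'n phase \<Rightarrow> real. C1_UNIV S \<and>
                (\<forall>q P. ((\<lambda>q'. S (qp q' P)) has_derivative (\<lambda>u. pp q P \<bullet> u)) (at q)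
                     \<and> ((\<lambda>P'. S (qp q P')) has_derivative (\<lambda>u. QQ q P \<bullet> u)) (at P)))
        in diffeo_UNIV \<Psi> \<and> invertible (blkD M) \<and>
           (\<exists>S. good S
              \<and> (\<forall>S'. good S' \<longrightarrow> (\<exists>c. \<forall>y. S' y = S y + c))
              \<and> (\<forall>x. GDERIV (\<lambda>y. (S y - qpart y \<bullet> ppart y) / \<Delta>T) (I1mat *v x + I2mat *v \<Phi> x)
                      :> (transpose Jmat *v ((1 / \<Delta>T) *\<^sub>R (\<Phi> x - x)))))))"
proof -
  have zeros: "\<not> t islimpt {s. det (blkD (Mflow H s)) = 0}" for t
    unfolding Mflow_def by (rule not_islimpt_zeros_det_blkD_mexp)
  have flow: "symplectic_invertible_D (Mflow H \<Delta>T)" if "det (blkD (Mflow H \<Delta>T)) \<noteq> 0" for \<Delta>T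
    using that symH
    by unfold_locales (simp_all add: Mflow_def symplectic_mexp_hamiltonian invertible_det_nz)
  show ?thesis
    using zeros symplectic_invertible_D.symplectic_map_generating_function[OF flow]
    by (simp add: Let_def generates_def to_qP_def[abs_def])
qed

end
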